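(* Let $n,k\ge 0$ be integers with $n\ge 2k$. For every $\alpha\in F_n(2,k)$ with $\alpha\ne\gamma_{n,k}$, the last word of the list $\mathcal{F}(\alpha)$ is $\gamma_{n,k}=0^{n-2k}(01)^k$.
   Context: The weight of a binary word is its number of 1's. $F_n(2,k)$ is the set of binary words of length $n$ and weight $k$ containing no two consecutive 1's. $\gamma_{n,k}=0^{n-2k}(01)^k$. A homogeneous transposition of a binary word exchanges a 1 and a 0 such that no 1 occurs strictly between the two exchanged positions. For a set $S$ of binary words of the same length and weight and $\alpha\in S$, the list obtained by applying the greedy algorithm for $S$ to $\alpha$ is built as follows: start with the list $(\alpha)$; repeatedly, for the last word $w$ of the current list, among all words obtainable from $w$ by one homogeneous transposition that lie in $S$ and do not already occur in the list, choose the one obtained by transposing the leftmost possible 1 with (among transpositions of that 1) the leftmost possible 0, and append it; stop when no such word exists. $\mathcal{F}(\alpha)$ denotes the list obtained by applying the greedy algorithm for $F_n(2,k)$ to $\alpha\in F_n(2,k)$. *)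

theory Defs
  imports Main
begin

text \<open>Binary words are boolean lists; True stands for the letter 1, False for 0.\<close>

definition weight :: "bool list \<Rightarrow> nat" where
  "weight w = count_list w True"

definition Fib_words :: "nat \<Rightarrow> nat \<Rightarrow> bool list set" where
  "Fib_words n k = {w. length w = n \<and> weight w = k \<and>
      (\<forall>i. Suc i < length w \<longrightarrow> \<not> (w ! i \<and> w ! Suc i))}"

definition gamma :: "nat \<Rightarrow> nat \<Rightarrow> bool list" where
  "gamma n k = replicate (n - 2 * k) False @ concat (replicate k [False, True])"

definition swap_pos :: "bool list \<Rightarrow> nat \<Rightarrow> nat \<Rightarrow> bool list" where
  "swap_pos w i j = w[i := w ! j, j := w ! i]"

definition homog_transp :: "bool list \<Rightarrow> nat \<Rightarrow> nat \<Rightarrow> bool" where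
  "homog_transp w i j \<longleftrightarrow> i < length w \<and> j < length w \<and> w ! i \<and> \<not> w ! j \<and>
      (\<forall>m. min i j < m \<and> m < max i j \<longrightarrow> \<not> w ! m)"

definition greedy_cands :: "bool list set \<Rightarrow> bool list list \<Rightarrow> (nat \<times> nat) set" where
  "greedy_cands S L = {(i, j). homog_transp (last L) i j \<and>
      swap_pos (last L) i j \<in> S \<and> swap_pos (last L) i j \<notin> set L}"

definition greedy_next :: "bool list set \<Rightarrow> bool list list \<Rightarrow> bool list option" where
  "greedy_next S L =
     (if greedy_cands S L = {} then None
      else (let i0 = (LEAST i. \<exists>j. (i, j) \<in> greedy_cands S L);
                j0 = (LEAST j. (i0, j) \<in> greedy_cands S L)
            in Some (swap_pos (last L) i0 j0)))"

fun greedy_aux :: "nat \<Rightarrow> bool list set \<Rightarrow> bool list list \<Rightarrow> bool list list" where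
  "greedy_aux 0 S L = L"
| "greedy_aux (Suc f) S L =
     (case greedy_next S L of None \<Rightarrow> L | Some w \<Rightarrow> greedy_aux f S (L @ [w]))"

text \<open>Every step appends a new element of S, so at most card S - 1 steps occur; the fuel
  card S therefore suffices for the algorithm to stop on its own.\<close>
definition greedy :: "bool list set \<Rightarrow> bool list \<Rightarrow> bool list list" where
  "greedy S \<alpha> = greedy_aux (card S) S [\<alpha>]"

definition F_list :: "nat \<Rightarrow> nat \<Rightarrow> bool list \<Rightarrow> bool list list" where
  "F_list n k \<alpha> = greedy (Fib_words n k) \<alpha>"

end

theory Submission
  imports Defs
begin

text \<open>Write a word of \<open>F_n(2,k)\<close> as \<open>v (01)^T\<close> with \<open>T\<close> maximal. Unless the word is
  \<open>\<gamma>\<close>, its last 1 outside the trailing blocks is followed by a nonempty run of 0's, and moving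
  it to the end of that run is admissible and raises \<open>T\<close>; every admissible transposition of a
  1 at or left of it stays inside \<open>v\<close> and so does not lower \<open>T\<close>. Hence the greedy choice,
  which moves the leftmost movable 1, never lowers \<open>T\<close>; so as long as \<open>\<gamma>\<close> is not reached,
  the last word has maximal \<open>T\<close> in the list, the raising move leads to a new word, and the
  algorithm cannot stop.

  In \<open>\<gamma> = 0^z (01)^k\<close> only the first 1 can move, and only to the left into \<open>0^z\<close>. So the
  step reaching \<open>\<gamma>\<close> came from a word with that 1 at some \<open>i \<le> z\<close>, and each move from \<open>\<gamma>\<close>
  yields that word or the word obtained from it by moving its 1 at \<open>i\<close> to a 0 left of
  \<open>z + 1\<close>. By the leftmost-0 rule all of these were visited before, so the algorithm stops
  at \<open>\<gamma>\<close>.\<close>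

lemma weight_append [simp]: "weight (xs @ ys) = weight xs + weight ys"
  by (simp add: weight_def)

definition zero_ones :: "nat \<Rightarrow> bool list" where
  "zero_ones t = concat (replicate t [False, True])"

lemma zero_ones_0 [simp]: "zero_ones 0 = []"
  by (simp add: zero_ones_def)

lemma zero_ones_Suc: "zero_ones (Suc t) = False # True # zero_ones t"
  by (simp add: zero_ones_def)

lemma length_zero_ones [simp]: "length (zero_ones t) = 2 * t"
  by (induction t) (simp_all add: zero_ones_Suc)

lemma weight_zero_ones [simp]: "weight (zero_ones t) = t"
  by (induction t) (simp_all add: zero_ones_Suc weight_def)

lemma nth_zero_ones: "x < 2 * t \<Longrightarrow> zero_ones t ! x = odd x"
proof (induction t arbitrary: x)
  case (Suc t)
  then show ?case
    by (auto simp: zero_ones_Suc nth_Cons split: nat.split)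
qed simp

lemma hd_zero_ones: "zero_ones t \<noteq> [] \<Longrightarrow> \<not> hd (zero_ones t)"
  by (cases t) (simp_all add: zero_ones_Suc)

lemma rev_zero_ones: "rev (zero_ones t) = concat (replicate t [True, False])"
  by (induction t) (simp_all add: zero_ones_Suc replicate_append_same[symmetric])

lemma gamma_eq: "gamma n k = replicate (n - 2 * k) False @ zero_ones k"
  by (simp add: gamma_def zero_ones_def)

lemma length_gamma: "2 * k \<le> n \<Longrightarrow> length (gamma n k) = n"
  by (simp add: gamma_eq)

lemma nth_gamma:
  "2 * k \<le> n \<Longrightarrow> x < n \<Longrightarrow> gamma n k ! x \<longleftrightarrow> n - 2 * k \<le> x \<and> odd (x - (n - 2 * k))"
  by (auto simp: gamma_eq nth_append nth_zero_ones)

fun leading_blocks :: "bool list \<Rightarrow> nat" where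
  "leading_blocks (True # False # xs) = Suc (leading_blocks xs)"
| "leading_blocks _ = 0"

definition trailing_blocks :: "bool list \<Rightarrow> nat" where
  "trailing_blocks w = leading_blocks (rev w)"

lemma trailing_blocks_append_zero_ones:
  "trailing_blocks (v @ zero_ones t) = trailing_blocks v + t"
proof -
  have "leading_blocks (concat (replicate t [True, False]) @ xs) = t + leading_blocks xs" for xs
    by (induction t) auto
  then show ?thesis
    by (simp add: trailing_blocks_def rev_zero_ones)
qed

lemma trailing_blocks_False_zero_ones: "trailing_blocks (v @ False # zero_ones t) = t"
  using trailing_blocks_append_zero_ones[of "v @ [False]" t] by (simp add: trailing_blocks_def)

lemma split_trailing_blocks:
  obtains v where "w = v @ zero_ones (trailing_blocks w)" "trailing_blocks v = 0"
proof -
  have "\<exists>ys. xs = concat (replicate (leading_blocks xs) [True, False]) @ ys \<and> leading_blocks ys = 0"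
    for xs by (induction xs rule: leading_blocks.induct) auto
  then obtain ys where ys: "rev w = concat (replicate (trailing_blocks w) [True, False]) @ ys"
    "leading_blocks ys = 0"
    unfolding trailing_blocks_def by blast
  then have "rev w = rev (zero_ones (trailing_blocks w)) @ ys"
    by (simp add: rev_zero_ones)
  then have "w = rev ys @ zero_ones (trailing_blocks w)"
    by (metis rev_append rev_rev_ident)
  then show thesis
    by (rule that) (simp add: trailing_blocks_def ys(2))
qed

lemma length_swap_pos [simp]: "length (swap_pos w i j) = length w"
  by (simp add: swap_pos_def)

lemma nth_swap_pos:
  "i < length w \<Longrightarrow> j < length w \<Longrightarrow>
   swap_pos w i j ! x = (if x = j then w ! i else if x = i then w ! j else w ! x)"
  by (simp add: swap_pos_def nth_list_update)

lemma swap_pos_append: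
  "i < length a \<Longrightarrow> j < length a \<Longrightarrow> swap_pos (a @ b) i j = swap_pos a i j @ b"
  by (simp add: swap_pos_def nth_append list_update_append)

lemma swap_pos_split:
  "swap_pos (xs @ x # ys @ y # zs) (length xs) (Suc (length xs + length ys)) = xs @ y # ys @ x # zs"
  by (simp add: swap_pos_def nth_append list_update_append)

fun no_adjacent_ones :: "bool list \<Rightarrow> bool" where
  "no_adjacent_ones (a # b # xs) \<longleftrightarrow> \<not> (a \<and> b) \<and> no_adjacent_ones (b # xs)"
| "no_adjacent_ones _ \<longleftrightarrow> True"

lemma no_adjacent_ones_Cons:
  "no_adjacent_ones (x # xs) \<longleftrightarrow> \<not> (x \<and> xs \<noteq> [] \<and> hd xs) \<and> no_adjacent_ones xs"
  by (cases xs) auto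

lemma no_adjacent_ones_append:
  "no_adjacent_ones (xs @ ys) \<longleftrightarrow>
     no_adjacent_ones xs \<and> no_adjacent_ones ys \<and> \<not> (xs \<noteq> [] \<and> ys \<noteq> [] \<and> last xs \<and> hd ys)"
  by (induction xs) (auto simp: no_adjacent_ones_Cons)

lemma no_adjacent_ones_iff_nth:
  "no_adjacent_ones w \<longleftrightarrow> (\<forall>i. Suc i < length w \<longrightarrow> \<not> (w ! i \<and> w ! Suc i))"
proof (induction w rule: no_adjacent_ones.induct)
  case (1 a b xs)
  then show ?case
    by (auto simp: All_less_Suc2 nth_Cons split: nat.split)
qed auto

lemma Fib_words_iff:
  "w \<in> Fib_words n k \<longleftrightarrow> length w = n \<and> weight w = k \<and> no_adjacent_ones w"
  by (simp add: Fib_words_def no_adjacent_ones_iff_nth)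

lemma no_adjacent_ones_zero_ones: "no_adjacent_ones (zero_ones t)"
  by (induction t) (auto simp: zero_ones_Suc no_adjacent_ones_Cons hd_zero_ones)

lemma no_adjacent_ones_replicate_False_append:
  "no_adjacent_ones (replicate r False @ xs) \<longleftrightarrow> no_adjacent_ones xs"
  by (induction r) (simp_all add: no_adjacent_ones_Cons)

lemma Fib_word_split_last_free_one:
  assumes "2 * k \<le> n" and w: "w \<in> Fib_words n k" and "w \<noteq> gamma n k"
  obtains u r T where "w = u @ True # replicate r False @ False # zero_ones T"
proof -
  define T where "T = trailing_blocks w"
  obtain v where wv: "w = v @ zero_ones T" and v: "trailing_blocks v = 0"
    unfolding T_def by (rule split_trailing_blocks)
  have len: "length v + 2 * T = n" and wt: "weight v + T = k" and adj: "no_adjacent_ones v"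
    using w unfolding wv Fib_words_iff no_adjacent_ones_append by simp_all
  have "True \<in> set v"
  proof (rule ccontr)
    assume "True \<notin> set v"
    then have "weight v = 0" and "v = replicate (length v) False"
      by (auto simp: weight_def intro: replicate_length_same[symmetric])
    moreover from this len wt have "T = k" "length v = n - 2 * k"
      by simp_all
    ultimately have "w = gamma n k"
      using wv by (simp add: gamma_eq)
    with \<open>w \<noteq> gamma n k\<close> show False ..
  qed
  then obtain v1 zs where v1: "v = v1 @ True # zs" and zs: "True \<notin> set zs"
    by (metis split_list_last)
  have "zs \<noteq> []"
    \<comment> \<open>otherwise \<open>v\<close> ends in 11, or in 01 against the maximality of \<open>T\<close>, or is 1, against
      \<open>2 * k \<le> n\<close>\<close>
  proof
    assume "zs = []"
    show False
    proof (cases v1 rule: rev_cases)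
      case Nil
      with v1 \<open>zs = []\<close> len wt \<open>2 * k \<le> n\<close> show False
        by (simp add: weight_def)
    next
      case (snoc y b)
      with v1 \<open>zs = []\<close> adj v show False
        by (cases b) (auto simp: no_adjacent_ones_append trailing_blocks_def)
    qed
  qed
  then obtain r where "length zs = Suc r"
    by (cases zs) auto
  moreover have "zs = replicate (length zs) False"
    using zs by (auto intro: replicate_length_same[symmetric])
  ultimately have "zs = replicate r False @ [False]"
    by (simp add: replicate_append_same)
  with wv v1 show thesis
    by (intro that) simp
qed

lemma advance_last_free_one:
  assumes w: "w = u @ True # replicate r False @ False # zero_ones T" and "w \<in> Fib_words n k"
  shows "homog_transp w (length u) (Suc (length u + r))"
    and "swap_pos w (length u) (Suc (length u + r)) \<in> Fib_words n k"
    and "trailing_blocks w < trailing_blocks (swap_pos w (length u) (Suc (length u + r)))"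
proof -
  have swap: "swap_pos w (length u) (Suc (length u + r)) =
      (u @ replicate r False) @ zero_ones (Suc T)"
    using swap_pos_split[of u True "replicate r False" False "zero_ones T"]
    by (simp add: w zero_ones_Suc replicate_append_same[symmetric])
  show "homog_transp w (length u) (Suc (length u + r))"
    by (auto simp: homog_transp_def w nth_append)
  show "swap_pos w (length u) (Suc (length u + r)) \<in> Fib_words n k"
    using \<open>w \<in> Fib_words n k\<close> unfolding swap
    by (auto simp: w Fib_words_iff weight_def zero_ones_Suc no_adjacent_ones_append
        no_adjacent_ones_Cons no_adjacent_ones_replicate_False_append no_adjacent_ones_zero_ones
        hd_zero_ones)
  show "trailing_blocks w < trailing_blocks (swap_pos w (length u) (Suc (length u + r)))"
    unfolding swap trailing_blocks_append_zero_ones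
    using trailing_blocks_False_zero_ones[of "u @ True # replicate r False" T] by (simp add: w)
qed

lemma trailing_blocks_mono_swap_left:
  assumes w: "w = u @ True # replicate r False @ False # zero_ones T"
    and h: "homog_transp w i j" and s: "swap_pos w i j \<in> Fib_words n k" and "i \<le> length u"
  shows "trailing_blocks w \<le> trailing_blocks (swap_pos w i j)"
proof -
  define v where "v = u @ True # replicate r False @ [False]"
  have wv: "w = v @ zero_ones T"
    by (simp add: v_def w)
  have len: "length w = length v + 2 * T"
    by (simp add: wv)
  have tail: "w ! x \<longleftrightarrow> odd (x - length v)" if "length v \<le> x" "x < length w" for x
    using that by (simp add: wv nth_append nth_zero_ones)
  have ij: "i < length w" "j < length w" "w ! i" "\<not> w ! j"
    using h by (simp_all add: homog_transp_def)
  have between: "\<not> w ! m" if "min i j < m" "m < max i j" for m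
    using h that by (simp add: homog_transp_def)
  have "j < length v"
  proof (rule ccontr)
    assume "\<not> j < length v"
    then have iv: "i < length v" "length v \<le> j"
      using \<open>i \<le> length u\<close> by (simp_all add: v_def)
    have "w ! length u"
      by (simp add: w nth_append)
    then have "\<not> i < length u"
      using between[of "length u"] iv by (auto simp: v_def)
    with \<open>i \<le> length u\<close> have "i = length u"
      by simp
    have "j = length v"
    proof (rule ccontr)
      assume "j \<noteq> length v"
      moreover have "even (j - length v)"
        using iv ij tail[of j] by simp
      ultimately have "Suc (length v) < j"
        using iv by (cases "j - length v") (auto elim!: oddE)
      moreover have "w ! Suc (length v)"
        using tail[of "Suc (length v)"] calculation ij by simp
      ultimately show False
        using between[of "Suc (length v)"] iv by simp
    qed
    then have "Suc (length v) < length w"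
      using ij len by simp
    then have "swap_pos w i j ! length v" and "swap_pos w i j ! Suc (length v)"
      using ij \<open>j = length v\<close> iv tail[of "Suc (length v)"] by (simp_all add: nth_swap_pos)
    with \<open>Suc (length v) < length w\<close> s show False
      by (auto simp: Fib_words_def)
  qed
  moreover have "i < length v"
    using \<open>i \<le> length u\<close> by (simp add: v_def)
  ultimately have "swap_pos w i j = swap_pos v i j @ zero_ones T"
    by (simp add: wv swap_pos_append)
  then show ?thesis
    using trailing_blocks_False_zero_ones[of "u @ True # replicate r False" T]
    by (simp add: w trailing_blocks_append_zero_ones)
qed

lemma homog_transp_clear_of_ones:
  assumes h: "homog_transp w a b" and s: "no_adjacent_ones (swap_pos w a b)"
    and c: "c < length w" "w ! c" "c \<noteq> a"
  shows "a < c \<Longrightarrow> Suc b < c" and "c < a \<Longrightarrow> Suc c < b"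
proof -
  have ab: "a < length w" "b < length w" "w ! a" "\<not> w ! b"
    using h by (simp_all add: homog_transp_def)
  have between: "\<not> (min a b < c \<and> c < max a b)"
    using h c by (auto simp: homog_transp_def)
  have "c \<noteq> b"
    using ab c by auto
  have adj: "\<not> (swap_pos w a b ! x \<and> swap_pos w a b ! Suc x)" if "Suc x < length w" for x
    using s that by (simp add: no_adjacent_ones_iff_nth)
  show "Suc b < c" if "a < c"
  proof -
    have "b < c"
      using between \<open>c \<noteq> b\<close> that by auto
    moreover have "Suc b \<noteq> c"
      using adj[of b] ab c \<open>c \<noteq> b\<close> by (auto simp: nth_swap_pos)
    ultimately show ?thesis
      by simp
  qed
  show "Suc c < b" if "c < a"
  proof -
    have "c < b"
      using between \<open>c \<noteq> b\<close> that by auto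
    moreover have "Suc c \<noteq> b"
      using adj[of c] ab c \<open>c \<noteq> b\<close> by (auto simp: nth_swap_pos)
    ultimately show ?thesis
      by simp
  qed
qed

lemma homog_transp_of_gamma:
  assumes "2 * k \<le> n" and h: "homog_transp (gamma n k) a b"
    and s: "swap_pos (gamma n k) a b \<in> Fib_words n k"
  shows "a = Suc (n - 2 * k)" and "b \<le> n - 2 * k"
proof -
  define z where "z = n - 2 * k"
  have n: "n = z + 2 * k"
    using \<open>2 * k \<le> n\<close> by (simp add: z_def)
  have len: "length (gamma n k) = n"
    using \<open>2 * k \<le> n\<close> by (rule length_gamma)
  have g: "gamma n k ! x \<longleftrightarrow> z \<le> x \<and> odd (x - z)" if "x < n" for x
    using nth_gamma[OF \<open>2 * k \<le> n\<close> that] by (simp add: z_def)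
  have ab: "a < n" "b < n" "gamma n k ! a" "\<not> gamma n k ! b" "a \<noteq> b"
    using h len by (auto simp: homog_transp_def)
  have adj: "no_adjacent_ones (swap_pos (gamma n k) a b)"
    using s by (simp add: Fib_words_iff)
  note clear = homog_transp_clear_of_ones[OF h adj, unfolded len]
  define p where "p = a - z"
  have p: "a = z + p" "odd p"
    using g ab by (auto simp: p_def)
  have "b < a"
  proof (rule ccontr)
    assume "\<not> b < a"
    then have "a < b"
      using ab by simp
    define q where "q = b - z"
    have q: "b = z + q" "p < q"
      using \<open>a < b\<close> p by (simp_all add: q_def)
    moreover have "even q"
      using g[of b] ab q by simp
    ultimately have "Suc q < 2 * k"
      using \<open>b < n\<close> n by (auto elim!: evenE)
    then have "a + 2 < n" and "gamma n k ! (a + 2)"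
      using g[of "a + 2"] n p q(2) by auto
    then have "Suc b < a + 2"
      using clear(1)[of "a + 2"] by simp
    with q p show False
      by simp
  qed
  moreover have "p = 1"
  proof (rule ccontr)
    assume "p \<noteq> 1"
    obtain m' where "p = 2 * m' + 1"
      using \<open>odd p\<close> by (rule oddE)
    with \<open>p \<noteq> 1\<close> obtain m where m: "p = 2 * m + 3"
      by (cases m') auto
    then have "gamma n k ! (a - 2)"
      using g[of "a - 2"] p ab by simp
    then have "Suc (a - 2) < b"
      using clear(2)[of "a - 2"] p m ab by simp
    with \<open>b < a\<close> m p show False
      by simp
  qed
  ultimately show "a = Suc (n - 2 * k)" and "b \<le> n - 2 * k"
    using p by (simp_all add: z_def)
qed

lemma swap_pos_swap_pos_back:
  "i < length w \<Longrightarrow> j < length w \<Longrightarrow> swap_pos (swap_pos w i j) j i = w"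
  by (rule nth_equalityI) (auto simp: nth_swap_pos)

lemma swap_pos_swap_pos_chain:
  assumes "i < length w" "j < length w" "b < length w" "b \<noteq> i" "b \<noteq> j" "w ! i = w ! b"
  shows "swap_pos (swap_pos w j i) i b = swap_pos w j b"
  using assms by (intro nth_equalityI) (auto simp: nth_swap_pos)

lemma homog_transp_swap_back: "homog_transp w i j \<Longrightarrow> homog_transp (swap_pos w i j) j i"
  by (auto simp: homog_transp_def nth_swap_pos min.commute max.commute)

lemma homog_transp_onto_gamma:
  assumes "2 * k \<le> n" and w: "w \<in> Fib_words n k" and h: "homog_transp w i j"
    and "swap_pos w i j = gamma n k"
  shows "i \<le> n - 2 * k" and "j = Suc (n - 2 * k)"
proof -
  have "homog_transp (gamma n k) j i"
    using homog_transp_swap_back[OF h] \<open>swap_pos w i j = gamma n k\<close> by simp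
  moreover have "swap_pos (gamma n k) j i \<in> Fib_words n k"
    using swap_pos_swap_pos_back[of i w j] h w \<open>swap_pos w i j = gamma n k\<close>
    by (simp add: homog_transp_def)
  ultimately show "i \<le> n - 2 * k" and "j = Suc (n - 2 * k)"
    using homog_transp_of_gamma[OF \<open>2 * k \<le> n\<close>] by blast+
qed

lemma transp_of_gamma_reached_first:
  assumes "2 * k \<le> n" and w: "w \<in> Fib_words n k" and h: "homog_transp w i j"
    and wg: "swap_pos w i j = gamma n k"
    and earlier: "\<And>b. homog_transp w i b \<Longrightarrow> swap_pos w i b \<in> Fib_words n k \<Longrightarrow> b < j \<Longrightarrow>
        swap_pos w i b \<in> S"
    and "w \<in> S"
    and hg: "homog_transp (gamma n k) a b" and s: "swap_pos (gamma n k) a b \<in> Fib_words n k"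
  shows "swap_pos (gamma n k) a b \<in> S"
proof -
  define z where "z = n - 2 * k"
  have len: "length (gamma n k) = n" "length w = n"
    using \<open>2 * k \<le> n\<close> w by (simp_all add: length_gamma Fib_words_iff)
  have prefix: "\<not> gamma n k ! x" if "x \<le> z" "x < n" for x
    using nth_gamma[OF \<open>2 * k \<le> n\<close> \<open>x < n\<close>] that by (auto simp: z_def)
  have ij: "i \<le> z" "j = Suc z"
    using homog_transp_onto_gamma[OF \<open>2 * k \<le> n\<close> w h wg] by (simp_all add: z_def)
  have ab: "a = Suc z" "b \<le> z"
    using homog_transp_of_gamma[OF \<open>2 * k \<le> n\<close> hg s] by (simp_all add: z_def)
  have "j < n" "b < n"
    using h hg len by (simp_all add: homog_transp_def)
  have w_eq: "w = swap_pos (gamma n k) j i"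
    using swap_pos_swap_pos_back[of i w j] h wg len by (simp add: homog_transp_def)
  show ?thesis
  proof (cases "b = i")
    case True
    then show ?thesis
      using w_eq ab ij \<open>w \<in> S\<close> by simp
  next
    case False
    have i_n: "i < n"
      using ij \<open>j < n\<close> by simp
    have swap_eq: "swap_pos w i b = swap_pos (gamma n k) a b"
      unfolding w_eq \<open>a = Suc z\<close> \<open>j = Suc z\<close>
      using False ab ij i_n \<open>b < n\<close> \<open>j < n\<close> prefix[of i] prefix[of b]
      by (intro swap_pos_swap_pos_chain) (simp_all add: len)
    have "homog_transp w i b"
      using h ab ij i_n \<open>b < n\<close> False prefix len
      by (auto simp: homog_transp_def w_eq nth_swap_pos)
    with swap_eq s ab ij show ?thesis
      using earlier[of b] by simp
  qed
qed

lemma greedy_next_eq_None_iff: "greedy_next S L = None \<longleftrightarrow> greedy_cands S L = {}"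
  by (simp add: greedy_next_def Let_def)

lemma greedy_next_SomeE:
  assumes "greedy_next S L = Some w'"
  obtains i j where "(i, j) \<in> greedy_cands S L" and "w' = swap_pos (last L) i j"
    and "\<And>i' j'. (i', j') \<in> greedy_cands S L \<Longrightarrow> i \<le> i'"
    and "\<And>j'. (i, j') \<in> greedy_cands S L \<Longrightarrow> j \<le> j'"
proof -
  define C where "C = greedy_cands S L"
  define i where "i = (LEAST i. \<exists>j. (i, j) \<in> C)"
  define j where "j = (LEAST j. (i, j) \<in> C)"
  have "C \<noteq> {}"
    using assms by (auto simp: greedy_next_eq_None_iff[symmetric] C_def)
  then have "\<exists>i j. (i, j) \<in> C"
    by auto
  then have "\<exists>j. (i, j) \<in> C"
    unfolding i_def by (rule LeastI_ex)
  then have "(i, j) \<in> C"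
    unfolding j_def by (rule LeastI_ex)
  moreover have "w' = swap_pos (last L) i j"
    using assms \<open>C \<noteq> {}\<close> by (simp add: greedy_next_def Let_def C_def i_def j_def)
  moreover have "i \<le> i'" if "(i', j') \<in> C" for i' j'
    unfolding i_def by (rule Least_le) (use that in blast)
  moreover have "j \<le> j'" if "(i, j') \<in> C" for j'
    unfolding j_def using that by (rule Least_le)
  ultimately show thesis
    by (intro that) (simp_all add: C_def)
qed

lemma greedy_cands_empty_after_gamma:
  assumes "2 * k \<le> n" and "last L \<in> set L" and last: "last L \<in> Fib_words n k"
    and ij: "(i, j) \<in> greedy_cands (Fib_words n k) L"
    and least_j: "\<And>j'. (i, j') \<in> greedy_cands (Fib_words n k) L \<Longrightarrow> j \<le> j'"
    and g: "swap_pos (last L) i j = gamma n k"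
  shows "greedy_cands (Fib_words n k) (L @ [gamma n k]) = {}"
proof -
  have h: "homog_transp (last L) i j"
    using ij by (simp add: greedy_cands_def)
  have earlier: "swap_pos (last L) i b \<in> set L"
    if "homog_transp (last L) i b" "swap_pos (last L) i b \<in> Fib_words n k" "b < j" for b
    using that least_j[of b] by (force simp: greedy_cands_def)
  have "swap_pos (gamma n k) a b \<in> set L"
    if "homog_transp (gamma n k) a b" "swap_pos (gamma n k) a b \<in> Fib_words n k" for a b
    using transp_of_gamma_reached_first[OF \<open>2 * k \<le> n\<close> last h g earlier \<open>last L \<in> set L\<close> that] .
  then show ?thesis
    by (auto simp: greedy_cands_def)
qed

definition greedy_invariant :: "nat \<Rightarrow> nat \<Rightarrow> bool list list \<Rightarrow> bool" where
  "greedy_invariant n k L \<longleftrightarrow> L \<noteq> [] \<and> distinct L \<and> set L \<subseteq> Fib_words n k \<and>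
     (last L \<noteq> gamma n k \<longrightarrow> (\<forall>s\<in>set L. trailing_blocks s \<le> trailing_blocks (last L))) \<and>
     (last L = gamma n k \<longrightarrow> greedy_cands (Fib_words n k) L = {})"

lemma greedy_cands_advance:
  assumes "2 * k \<le> n" and inv: "greedy_invariant n k L" and "last L \<noteq> gamma n k"
  obtains i j where "(i, j) \<in> greedy_cands (Fib_words n k) L"
    and "\<And>i' j'. (i', j') \<in> greedy_cands (Fib_words n k) L \<Longrightarrow> i' \<le> i \<Longrightarrow>
      trailing_blocks (last L) \<le> trailing_blocks (swap_pos (last L) i' j')"
proof -
  have "last L \<in> set L"
    using inv by (simp add: greedy_invariant_def)
  with inv have last: "last L \<in> Fib_words n k"
    unfolding greedy_invariant_def by blast
  obtain u r T where u: "last L = u @ True # replicate r False @ False # zero_ones T"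
    using Fib_word_split_last_free_one[OF \<open>2 * k \<le> n\<close> last \<open>last L \<noteq> gamma n k\<close>] .
  note adv = advance_last_free_one[OF u last]
  have "swap_pos (last L) (length u) (Suc (length u + r)) \<notin> set L"
    using adv(3) inv \<open>last L \<noteq> gamma n k\<close> by (fastforce simp: greedy_invariant_def)
  with adv have "(length u, Suc (length u + r)) \<in> greedy_cands (Fib_words n k) L"
    by (simp add: greedy_cands_def)
  then show thesis
    using trailing_blocks_mono_swap_left[OF u]
    by (rule that) (auto simp: greedy_cands_def)
qed

lemma greedy_invariant_step:
  assumes "2 * k \<le> n" and inv: "greedy_invariant n k L"
    and next_w: "greedy_next (Fib_words n k) L = Some w'"
  shows "greedy_invariant n k (L @ [w'])"
proof -
  let ?C = "greedy_cands (Fib_words n k) L"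
  obtain i j where ij: "(i, j) \<in> ?C" and w': "w' = swap_pos (last L) i j"
    and least_i: "\<And>i' j'. (i', j') \<in> ?C \<Longrightarrow> i \<le> i'"
    and least_j: "\<And>j'. (i, j') \<in> ?C \<Longrightarrow> j \<le> j'"
    using greedy_next_SomeE[OF next_w] by blast
  have new: "w' \<in> Fib_words n k" "w' \<notin> set L"
    using ij w' by (auto simp: greedy_cands_def)
  have "last L \<noteq> gamma n k"
    using inv next_w by (auto simp: greedy_invariant_def greedy_next_eq_None_iff[symmetric])
  then obtain i0 j0 where "(i0, j0) \<in> ?C"
    and mono: "\<And>i' j'. (i', j') \<in> ?C \<Longrightarrow> i' \<le> i0 \<Longrightarrow>
      trailing_blocks (last L) \<le> trailing_blocks (swap_pos (last L) i' j')"
    using greedy_cands_advance[OF \<open>2 * k \<le> n\<close> inv] by blast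
  have "trailing_blocks (last L) \<le> trailing_blocks w'"
    using mono[OF ij] least_i[OF \<open>(i0, j0) \<in> ?C\<close>] w' by simp
  then have tb: "w' \<noteq> gamma n k \<Longrightarrow> \<forall>s\<in>set (L @ [w']). trailing_blocks s \<le> trailing_blocks w'"
    using inv \<open>last L \<noteq> gamma n k\<close> by (fastforce simp: greedy_invariant_def)
  have "last L \<in> set L"
    using inv by (simp add: greedy_invariant_def)
  moreover from this inv have "last L \<in> Fib_words n k"
    unfolding greedy_invariant_def by blast
  ultimately have "greedy_cands (Fib_words n k) (L @ [w']) = {}" if "w' = gamma n k"
    using greedy_cands_empty_after_gamma[OF \<open>2 * k \<le> n\<close> _ _ ij least_j] w' that by simp
  with inv new tb show ?thesis
    by (auto simp: greedy_invariant_def)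
qed

lemma greedy_aux_reaches_gamma:
  assumes "2 * k \<le> n" and "greedy_invariant n k L" and "card (Fib_words n k) < length L + f"
  shows "last (greedy_aux f (Fib_words n k) L) = gamma n k"
  using assms(2,3)
proof (induction f arbitrary: L)
  case 0
  have "finite (Fib_words n k)"
    using finite_lists_length_eq[of "UNIV :: bool set" n]
    by (rule finite_subset[rotated]) (auto simp: Fib_words_def)
  with "0.prems"(1) have "length L \<le> card (Fib_words n k)"
    by (auto simp: greedy_invariant_def distinct_card[symmetric] intro: card_mono)
  with "0.prems"(2) show ?case
    by simp
next
  case (Suc f)
  show ?case
  proof (cases "greedy_next (Fib_words n k) L")
    case None
    then have "last L = gamma n k"
      using greedy_cands_advance[OF \<open>2 * k \<le> n\<close> Suc.prems(1)]
      by (auto simp: greedy_next_eq_None_iff)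
    with None show ?thesis
      by simp
  next
    case (Some w')
    with Suc.IH[of "L @ [w']"] Suc.prems greedy_invariant_step[OF \<open>2 * k \<le> n\<close>] show ?thesis
      by simp
  qed
qed

theorem lemma1:
  fixes n k :: nat and \<alpha> :: "bool list"
  assumes "2 * k \<le> n"
    and "\<alpha> \<in> Fib_words n k"
    and "\<alpha> \<noteq> gamma n k"
  shows "last (F_list n k \<alpha>) = gamma n k"
proof -
  have "greedy_invariant n k [\<alpha>]"
    using assms by (simp add: greedy_invariant_def)
  then show ?thesis
    unfolding F_list_def greedy_def
    by (rule greedy_aux_reaches_gamma[OF \<open>2 * k \<le> n\<close>]) simp
qed

end
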